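(* Let $P$ be a convergent periodic orbit with over-rotation pair $(nr,ns)$, where $n,r,s\in\mathbb{N}$, $\gcd(r,s)=1$ and $n>1$, and suppose the code of $P$ is non-decreasing. Then the $P$-linear map $f$ has no periodic orbit of over-rotation number less than $\frac rs$; in other words, $P$ does not force any periodic orbit of over-rotation number less than $\frac rs$.
   Context: For a cycle $P$ of a map $f$, the $P$-linear map agrees with $f$ on $P$ and is affine between consecutive points of $P$. $P$ is convergent if there are no $x<y$ in $P$ with $f(x)<x$, $f(y)>y$; then the $P$-linear map has a unique fixed point $a$. Over-rotation pair: for a cycle $P$ of period $q\ge2$, $2p$ is the number of $x\in P$ with $f(x)-x$ and $f^2(x)-f(x)$ of different signs; $orp(P)=(p,q)$, $\rho(P)=p/q$ (and similarly for non-fixed periodic orbits of $f$). Write $x>_a y$ if $x<y<a$ or $x>y>a$. Code: with $\rho=\rho(P)$ and $\varphi(y)=1$ if $y>a$ and $f(y)<a$, $\varphi(y)=0$ otherwise, the code $L:P\to\mathbb{R}$ is given by $L(x_0)=0$ for the leftmost point $x_0$ of $P$ and $L(f(y))=L(y)+\rho-\varphi(y)$. The code is non-decreasing if $x>_a y$ implies $L(x)\le L(y)$ for all $x,y\in P$. *)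

theory Defs
  imports Complex_Main
begin

definition periodic_orbit :: "(real \<Rightarrow> real) \<Rightarrow> real set \<Rightarrow> bool" where
  "periodic_orbit g Q \<longleftrightarrow>
     (\<exists>x n. n > 0 \<and> (g ^^ n) x = x \<and> Q = range (\<lambda>k. (g ^^ k) x))"

definition cycle :: "(real \<Rightarrow> real) \<Rightarrow> real set \<Rightarrow> bool" where
  "cycle g P \<longleftrightarrow> periodic_orbit g P \<and> card P \<ge> 2"

definition convergent :: "(real \<Rightarrow> real) \<Rightarrow> real set \<Rightarrow> bool" where
  "convergent f P \<longleftrightarrow> \<not> (\<exists>x\<in>P. \<exists>y\<in>P. x < y \<and> f x < x \<and> f y > y)"

text \<open>The P-linear map: agrees with f on P, affine between consecutive points of P;
  extended constantly outside [min P, max P] (this adds no periodic points).\<close>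
definition plin :: "(real \<Rightarrow> real) \<Rightarrow> real set \<Rightarrow> real \<Rightarrow> real" where
  "plin f P x =
     (if x \<le> Min P then f (Min P)
      else if x \<ge> Max P then f (Max P)
      else (let a = Max {y\<in>P. y \<le> x}; b = Min {y\<in>P. x < y}
            in f a + (f b - f a) * (x - a) / (b - a)))"

text \<open>Number of points x of Q where g x - x and g (g x) - g x have different signs
  (this number is 2p, where (p,q) is the over-rotation pair).\<close>
definition ocount :: "(real \<Rightarrow> real) \<Rightarrow> real set \<Rightarrow> nat" where
  "ocount g Q = card {x\<in>Q. (g x - x) * (g (g x) - g x) < 0}"

definition orp :: "(real \<Rightarrow> real) \<Rightarrow> real set \<Rightarrow> nat \<times> nat" where
  "orp g Q = (ocount g Q div 2, card Q)"

definition orn :: "(real \<Rightarrow> real) \<Rightarrow> real set \<Rightarrow> real" where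
  "orn g Q = real (ocount g Q div 2) / real (card Q)"

definition phi :: "(real \<Rightarrow> real) \<Rightarrow> real \<Rightarrow> real \<Rightarrow> real" where
  "phi f a y = (if y > a \<and> f y < a then 1 else 0)"

text \<open>The code L of P (w.r.t. the fixed point a): L(x0) = 0 for x0 = min P and
  L(f y) = L y + rho - phi y; unfolded along the orbit of x0.\<close>
definition code :: "(real \<Rightarrow> real) \<Rightarrow> real set \<Rightarrow> real \<Rightarrow> real \<Rightarrow> real" where
  "code f P a x =
     (let k = (LEAST k. (f ^^ k) (Min P) = x)
      in real k * orn f P - (\<Sum>j<k. phi f a ((f ^^ j) (Min P))))"

definition code_nondecreasing :: "(real \<Rightarrow> real) \<Rightarrow> real set \<Rightarrow> real \<Rightarrow> bool" where
  "code_nondecreasing f P a \<longleftrightarrow>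
     (\<forall>x\<in>P. \<forall>y\<in>P. ((x < y \<and> y < a) \<or> (x > y \<and> y > a)) \<longrightarrow> code f P a x \<le> code f P a y)"

end

theory Submission imports Defs begin

text \<open>
  Extend the code L of P to a function L' on [Min P, Max P] - {a} by letting L' x be the code
  of the point of P nearest to x among those lying beyond x as seen from a. Because the code is
  non-decreasing and the P-linear map g sends the gap between consecutive points u, v of P into
  the hull of f u, f v (and of a), the recurrence L (f y) = L y + \<rho> - \<phi> y of the code
  becomes the inequality L' (g x) \<ge> L' x + \<rho> - \<phi> x for every point x of a cycle Q of g.
  Summing it over Q, the values of L' cancel since g permutes Q, and
  \<rho> |Q| \<le> #{x \<in> Q. x > a, g x < a}. Convergence makes g move every point of
  [Min P, Max P] towards a, so that count is half the number of turning points of Q, and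
  \<rho> \<le> orn g Q. Finally \<rho> = nr/(ns) = r/s.
\<close>

section \<open>Periodic orbits\<close>

lemma funpow_fixpoint: "g z = z \<Longrightarrow> (g ^^ k) z = z"
  by (induction k) auto

lemma funpow_least_period:
  assumes "N > 0" "(g ^^ N) z = z"
  defines "m \<equiv> LEAST k. 0 < k \<and> (g ^^ k) z = z"
  shows "0 < m" "(g ^^ m) z = z" "inj_on (\<lambda>k. (g ^^ k) z) {..<m}"
    "range (\<lambda>k. (g ^^ k) z) = (\<lambda>k. (g ^^ k) z) ` {..<m}"
proof -
  have m: "0 < m \<and> (g ^^ m) z = z"
    unfolding m_def by (rule LeastI[of _ N]) (use assms in auto)
  then show "0 < m" "(g ^^ m) z = z" by auto
  have "(g ^^ i) z \<noteq> (g ^^ j) z" if "i < j" "j < m" for i j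
  proof
    assume eq: "(g ^^ i) z = (g ^^ j) z"
    have "(g ^^ (m - j + i)) z = (g ^^ (m - j)) ((g ^^ j) z)"
      using eq by (simp add: funpow_add)
    also have "\<dots> = z"
      using m that by (metis comp_apply funpow_add le_add_diff_inverse2 less_imp_le)
    finally have "(g ^^ (m - j + i)) z = z" .
    moreover have "0 < m - j + i" "m - j + i < m" using that by auto
    ultimately show False
      using not_less_Least[of "m - j + i" "\<lambda>k. 0 < k \<and> (g ^^ k) z = z"] unfolding m_def by blast
  qed
  then show "inj_on (\<lambda>k. (g ^^ k) z) {..<m}"
    unfolding inj_on_def by (metis lessThan_iff linorder_neqE_nat)
  have "(g ^^ k) z \<in> (\<lambda>k. (g ^^ k) z) ` {..<m}" for k
  proof (rule rev_image_eqI)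
    show "k mod m \<in> {..<m}" using m by simp
    show "(g ^^ k) z = (g ^^ (k mod m)) z" using funpow_mod_eq[where f=g and x=z] m by metis
  qed
  then show "range (\<lambda>k. (g ^^ k) z) = (\<lambda>k. (g ^^ k) z) ` {..<m}" by auto
qed

lemma periodic_orbit_from_point:
  assumes "periodic_orbit g Q" "z \<in> Q"
  shows "Q = range (\<lambda>k. (g ^^ k) z)" "\<exists>N>0. (g ^^ N) z = z"
proof -
  obtain x N where N: "N > 0" "(g ^^ N) x = x" and Q: "Q = range (\<lambda>k. (g ^^ k) x)"
    using assms(1) unfolding periodic_orbit_def by blast
  obtain i where i: "z = (g ^^ i) x" using assms(2) Q by blast
  have "(g ^^ N) z = (g ^^ i) ((g ^^ N) x)"
    unfolding i by (metis comp_apply funpow_add add.commute)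
  then show "\<exists>N>0. (g ^^ N) z = z" using N i by auto
  have "(g ^^ j) x \<in> range (\<lambda>k. (g ^^ k) z)" for j
  proof -
    have "i \<le> N * i" using N(1) by (cases N) auto
    then have shift: "j + N * i - i + i = j + N * i" by (metis le_add_diff_inverse2 trans_le_add2)
    have "(g ^^ (j + N * i - i)) z = (g ^^ (j + N * i - i + i)) x"
      using i by (simp add: funpow_add)
    also have "\<dots> = (g ^^ (j + N * i)) x" by (simp only: shift)
    also have "\<dots> = (g ^^ j) x"
      using funpow_mod_eq[OF N(2), of "N * i"] by (simp add: funpow_add)
    finally show ?thesis by (metis rangeI)
  qed
  moreover have "(g ^^ k) z \<in> Q" for k
    using i Q by (metis comp_apply funpow_add rangeI)
  ultimately show "Q = range (\<lambda>k. (g ^^ k) z)" using Q by blast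
qed

lemma periodic_orbit_finite:
  assumes "periodic_orbit g Q" shows "finite Q"
proof -
  obtain x N where N: "N > 0" "(g ^^ N) x = x" and Q: "Q = range (\<lambda>k. (g ^^ k) x)"
    using assms unfolding periodic_orbit_def by blast
  show ?thesis unfolding Q funpow_least_period(4)[OF N] by simp
qed

lemma periodic_orbit_image:
  assumes "periodic_orbit g Q" shows "g ` Q = Q"
proof -
  obtain x N where N: "N > 0" "(g ^^ N) x = x" and Q: "Q = range (\<lambda>k. (g ^^ k) x)"
    using assms unfolding periodic_orbit_def by blast
  have "(g ^^ k) x = g ((g ^^ (k + N - 1)) x)" for k
  proof -
    have "(g ^^ k) x = (g ^^ (k + N)) x" using N(2) by (simp add: funpow_add)
    also have "k + N = Suc (k + N - 1)" using N(1) by simp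
    finally show ?thesis by simp
  qed
  then have "range (\<lambda>k. (g ^^ k) x) \<subseteq> g ` range (\<lambda>k. (g ^^ k) x)" by blast
  moreover have "g ((g ^^ k) x) \<in> range (\<lambda>k. (g ^^ k) x)" for k
    by (rule range_eqI[of _ _ "Suc k"]) simp
  ultimately show ?thesis unfolding Q by blast
qed

lemma periodic_orbit_enumerate:
  assumes "periodic_orbit g Q" "z \<in> Q"
  shows "bij_betw (\<lambda>k. (g ^^ k) z) {..<card Q} Q" "(g ^^ card Q) z = z"
proof -
  obtain N where N: "N > 0" "(g ^^ N) z = z" using periodic_orbit_from_point(2)[OF assms] by blast
  define m where "m = (LEAST k. 0 < k \<and> (g ^^ k) z = z)"
  note m = funpow_least_period[OF N, folded m_def]
  have bij: "bij_betw (\<lambda>k. (g ^^ k) z) {..<m} Q"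
    using m periodic_orbit_from_point(1)[OF assms] unfolding bij_betw_def by simp
  then have "card Q = m" using bij_betw_same_card by fastforce
  then show "bij_betw (\<lambda>k. (g ^^ k) z) {..<card Q} Q" "(g ^^ card Q) z = z"
    using bij m(2) by auto
qed

lemma periodic_orbit_fixed_point:
  assumes "periodic_orbit g Q" "z \<in> Q" "g z = z" shows "Q = {z}"
  using periodic_orbit_from_point(1)[OF assms(1,2)] funpow_fixpoint[of g z] assms(3) by auto

lemma cycle_no_fixed_point: "cycle g Q \<Longrightarrow> z \<in> Q \<Longrightarrow> g z \<noteq> z"
  unfolding cycle_def using periodic_orbit_fixed_point by fastforce

section \<open>Counting turning points\<close>

definition moves_toward :: "(real \<Rightarrow> real) \<Rightarrow> real \<Rightarrow> real \<Rightarrow> bool" where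
  "moves_toward h a x \<longleftrightarrow> (x < a \<longrightarrow> x < h x) \<and> (a < x \<longrightarrow> h x < x)"

lemma turning_point_iff_crossing:
  assumes "x \<noteq> a" "h x \<noteq> a" "moves_toward h a x" "moves_toward h a (h x)"
  shows "(h x - x) * (h (h x) - h x) < 0 \<longleftrightarrow> (x < a \<and> a < h x) \<or> (a < x \<and> h x < a)"
proof -
  consider "x < a" "h x < a" | "x < a" "a < h x" | "a < x" "h x < a" | "a < x" "a < h x"
    using assms(1,2) by (meson linorder_neqE_linordered_idom)
  then show ?thesis
    by cases (use assms(3,4) in \<open>auto simp: moves_toward_def mult_less_0_iff\<close>)
qed

text \<open>Up- and down-crossings of a are equinumerous: h maps the points of Q that land left of a
  bijectively onto the points of Q left of a.\<close>
lemma ocount_eq_twice_down_crossings: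
  fixes h :: "real \<Rightarrow> real"
  assumes fin: "finite Q" and perm: "h ` Q = Q" and aQ: "a \<notin> Q"
    and toward: "\<And>x. x \<in> Q \<Longrightarrow> moves_toward h a x"
  shows "ocount h Q = 2 * card {x\<in>Q. a < x \<and> h x < a}"
proof -
  define U where "U = {x\<in>Q. x < a \<and> a < h x}"
  define D where "D = {x\<in>Q. a < x \<and> h x < a}"
  define S where "S = {x\<in>Q. x < a \<and> h x < a}"
  have hQ: "h x \<in> Q" if "x \<in> Q" for x using perm that by blast
  have ne: "x \<noteq> a" if "x \<in> Q" for x using aQ that by blast
  have turning: "{x\<in>Q. (h x - x) * (h (h x) - h x) < 0} = U \<union> D"
  proof -
    have "(h x - x) * (h (h x) - h x) < 0 \<longleftrightarrow> (x < a \<and> a < h x) \<or> (a < x \<and> h x < a)"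
      if "x \<in> Q" for x
      using turning_point_iff_crossing ne hQ toward that by blast
    then show ?thesis unfolding U_def D_def by blast
  qed
  have fins: "finite U" "finite D" "finite S" using fin unfolding U_def D_def S_def by auto
  have left: "{x\<in>Q. x < a} = S \<union> U" and left_pre: "{x\<in>Q. h x < a} = S \<union> D"
    unfolding S_def U_def D_def using ne hQ by (auto simp: neq_iff)
  have "bij_betw h {x\<in>Q. h x < a} {x\<in>Q. x < a}"
    using perm finite_surj_inj[OF fin] unfolding bij_betw_def inj_on_def by auto
  then have "card (S \<union> D) = card (S \<union> U)" using left left_pre by (simp add: bij_betw_same_card)
  then have "card U = card D"
    using fins by (simp add: card_Un_disjoint S_def U_def D_def disjoint_iff)
  then show ?thesis
    unfolding ocount_def turning D_def[symmetric]
    using fins by (simp add: card_Un_disjoint U_def D_def disjoint_iff)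
qed

lemma orn_eq_down_crossings:
  fixes h :: "real \<Rightarrow> real"
  assumes "finite Q" "h ` Q = Q" "a \<notin> Q" "\<And>x. x \<in> Q \<Longrightarrow> moves_toward h a x"
  shows "orn h Q = real (card {x\<in>Q. a < x \<and> h x < a}) / real (card Q)"
  using ocount_eq_twice_down_crossings[OF assms] unfolding orn_def by simp

lemma sum_phi_eq_down_crossings:
  "finite Q \<Longrightarrow> (\<Sum>x\<in>Q. phi h a x) = real (card {x\<in>Q. a < x \<and> h x < a})"
  unfolding phi_def by (simp add: sum.inter_filter[symmetric])

section \<open>The code of a periodic orbit\<close>

lemma code_step:
  assumes P: "periodic_orbit f P" and y: "y \<in> P"
    and balance: "real (card P) * orn f P = (\<Sum>p\<in>P. phi f a p)"
  shows "code f P a (f y) = code f P a y + orn f P - phi f a y"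
proof -
  define x0 where "x0 = Min P"
  define m where "m = card P"
  define idx where "idx z = (LEAST k. (f ^^ k) x0 = z)" for z
  have "finite P" "P \<noteq> {}"
    using periodic_orbit_finite[OF P] P unfolding periodic_orbit_def by auto
  then have "x0 \<in> P" unfolding x0_def by simp
  note enum = periodic_orbit_enumerate[OF P this, folded m_def]
  have code: "code f P a z = real (idx z) * orn f P - (\<Sum>j<idx z. phi f a ((f ^^ j) x0))" for z
    unfolding code_def idx_def x0_def Let_def by simp
  have idx: "idx ((f ^^ k) x0) = k" if "k < m" for k
    unfolding idx_def
  proof (rule Least_equality)
    show "k \<le> j" if "(f ^^ j) x0 = (f ^^ k) x0" for j
    proof (rule ccontr)
      assume "\<not> k \<le> j"
      then show False using enum(1) \<open>k < m\<close> that by (auto simp: bij_betw_def inj_on_def)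
    qed
  qed simp
  obtain k where k: "k < m" "y = (f ^^ k) x0" using enum(1) y by (auto simp: bij_betw_def)
  show ?thesis
  proof (cases "Suc k < m")
    case True
    then have "idx (f y) = Suc k" using idx[of "Suc k"] k by simp
    then show ?thesis using code[of "f y"] code[of y] idx[OF k(1)] k(2)
      by (simp add: algebra_simps)
  next
    case False
    then have "f y = x0" using k enum(2) by (metis Suc_lessI comp_apply funpow.simps(2))
    moreover have "idx x0 = 0" using idx[of 0] k by simp
    moreover have "(\<Sum>j<m. phi f a ((f ^^ j) x0)) = (\<Sum>p\<in>P. phi f a p)"
      using sum.reindex_bij_betw[OF enum(1)] .
    moreover have "card P = Suc k" using False k(1) unfolding m_def by simp
    ultimately show ?thesis
      using code[of "f y"] code[of y] idx[OF k(1)] k(2) balance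
      by (simp add: m_def algebra_simps)
  qed
qed

section \<open>The P-linear map\<close>

definition consecutive :: "real set \<Rightarrow> real \<Rightarrow> real \<Rightarrow> bool" where
  "consecutive P u v \<longleftrightarrow> u \<in> P \<and> v \<in> P \<and> u < v \<and> (\<forall>y\<in>P. \<not> (u < y \<and> y < v))"

definition between :: "real \<Rightarrow> real \<Rightarrow> real \<Rightarrow> bool" where
  "between y p q \<longleftrightarrow> (p \<le> y \<and> y \<le> q) \<or> (q \<le> y \<and> y \<le> p)"

lemma affine_between:
  fixes c K x y z :: real
  assumes "y \<le> x" "x \<le> z"
  shows "between (c + K * x) (c + K * y) (c + K * z)"
proof (cases "K \<ge> 0")
  case True
  then show ?thesis using assms unfolding between_def by (auto intro: mult_left_mono)
next
  case False
  then show ?thesis using assms unfolding between_def by (auto intro: mult_left_mono_neg)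
qed

lemma Max_le_eq_consecutive:
  assumes "finite P" "consecutive P u v" "u < x" "x < v"
  shows "Max {p\<in>P. p \<le> x} = u"
  using assms by (intro Max_eqI) (force simp: consecutive_def)+

lemma Min_ge_eq_consecutive:
  assumes "finite P" "consecutive P u v" "u < x" "x < v"
  shows "Min {p\<in>P. x \<le> p} = v"
  using assms by (intro Min_eqI) (force simp: consecutive_def)+

lemma consecutive_around:
  assumes "finite P" "2 \<le> card P" "Min P \<le> x" "x \<le> Max P"
  obtains u v where "consecutive P u v" "u \<le> x" "x \<le> v"
proof -
  have ne: "P \<noteq> {}" using assms(2) by auto
  have "Min P < Max P"
  proof (rule ccontr)
    assume "\<not> Min P < Max P"
    then have "x = Min P" if "x \<in> P" for x
      using Min_le[OF assms(1) that] Max_ge[OF assms(1) that] by linarith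
    then have "P \<subseteq> {Min P}" by blast
    then have "card P \<le> 1" using card_mono[of "{Min P}" P] by simp
    then show False using assms(2) by simp
  qed
  define V where "V = {p\<in>P. Min P < p \<and> x \<le> p}"
  have V: "finite V" "Max P \<in> V" using assms ne \<open>Min P < Max P\<close> unfolding V_def by auto
  define v where "v = Min V"
  have "v \<in> V" unfolding v_def using V by (intro Min_in) auto
  then have v: "v \<in> P" "Min P < v" "x \<le> v" unfolding V_def by auto
  define U where "U = {p\<in>P. p < v}"
  have U: "finite U" "Min P \<in> U" using assms(1) ne v unfolding U_def by auto
  define u where "u = Max U"
  have "u \<in> U" unfolding u_def using U by (intro Max_in) auto
  then have u: "u \<in> P" "u < v" unfolding U_def by auto
  have gap: "\<not> (u < y \<and> y < v)" if "y \<in> P" for y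
    using Max_ge[OF U(1), of y] that unfolding u_def U_def by auto
  have "u \<le> x"
  proof (rule ccontr)
    assume "\<not> u \<le> x"
    then have "u \<in> V" using u assms(3) unfolding V_def by auto
    then show False using Min_le[OF V(1)] u unfolding v_def by fastforce
  qed
  then show ?thesis using that u v gap unfolding consecutive_def by blast
qed

lemma plin_on_P:
  assumes "finite P" "p \<in> P" shows "plin f P p = f p"
proof -
  have "Min P \<le> p" "p \<le> Max P" "Max {y\<in>P. y \<le> p} = p"
    using assms by (auto intro: Max_eqI)
  then show ?thesis by (auto simp: plin_def Let_def)
qed

lemma plin_affine:
  assumes "finite P" "consecutive P u v" "u \<le> x" "x \<le> v"
  shows "plin f P x = f u + ((f v - f u) / (v - u)) * (x - u)"
proof -
  have uv: "u \<in> P" "v \<in> P" "u < v" using assms(2) unfolding consecutive_def by auto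
  consider "x = u" | "x = v" | "u < x" "x < v" using assms(3,4) by linarith
  then show ?thesis
  proof cases
    case 3
    have "{y\<in>P. x < y} = {y\<in>P. x \<le> y}" using assms(2) 3 by (force simp: consecutive_def)
    then have "Max {y\<in>P. y \<le> x} = u" "Min {y\<in>P. x < y} = v"
      using Max_le_eq_consecutive[OF assms(1,2) 3] Min_ge_eq_consecutive[OF assms(1,2) 3] by auto
    moreover have "Min P < x" "x < Max P"
      using Min_le[OF assms(1) uv(1)] Max_ge[OF assms(1) uv(2)] 3 by linarith+
    ultimately show ?thesis by (simp add: plin_def Let_def)
  qed (use plin_on_P[OF assms(1)] uv in auto)
qed

lemma plin_minus_linear_between:
  assumes "finite P" "consecutive P u v" "u \<le> y" "y \<le> x" "x \<le> z" "z \<le> v"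
  shows "between (plin f P x - t * x) (plin f P y - t * y) (plin f P z - t * z)"
proof -
  define K where "K = (f v - f u) / (v - u)"
  have "plin f P w - t * w = (f u - K * u) + (K - t) * w" if "u \<le> w" "w \<le> v" for w
    using plin_affine[OF assms(1,2) that, of f, folded K_def] by (simp add: algebra_simps)
  then show ?thesis using affine_between[OF assms(4,5)] assms by simp
qed

lemma plin_between:
  assumes "finite P" "consecutive P u v" "u \<le> y" "y \<le> x" "x \<le> z" "z \<le> v"
  shows "between (plin f P x) (plin f P y) (plin f P z)"
  using plin_minus_linear_between[OF assms, where t=0] by simp

section \<open>Convergent cycles\<close>

locale convergent_cycle =
  fixes f :: "real \<Rightarrow> real" and P :: "real set" and a :: real
  assumes cycle_P: "cycle f P" and convergent_P: "convergent f P"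
    and fixed_point: "plin f P a = a"
begin

abbreviation g :: "real \<Rightarrow> real" where "g \<equiv> plin f P"

lemma finite_P: "finite P"
  using cycle_P periodic_orbit_finite unfolding cycle_def by blast

lemma card_P: "2 \<le> card P"
  using cycle_P unfolding cycle_def by blast

lemma f_image_P: "f ` P = P"
  using cycle_P periodic_orbit_image unfolding cycle_def by blast

lemma f_in_P: "p \<in> P \<Longrightarrow> f p \<in> P"
  using f_image_P by blast

lemma f_no_fixed_point: "p \<in> P \<Longrightarrow> f p \<noteq> p"
  using cycle_P cycle_no_fixed_point by blast

lemma fixed_point_inside: "Min P < a" "a < Max P" "a \<notin> P"
proof -
  have "P \<noteq> {}" using card_P by auto
  then have m: "Min P \<in> P" "Max P \<in> P" using finite_P by auto
  then have bounds: "Min P \<le> f (Min P)" "f (Max P) \<le> Max P" using f_in_P finite_P by auto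
  show "Min P < a"
  proof (rule ccontr)
    assume "\<not> Min P < a"
    then have "f (Min P) \<le> Min P" using fixed_point by (simp add: plin_def)
    then show False using bounds f_no_fixed_point[OF m(1)] by simp
  qed
  show "a < Max P"
  proof (rule ccontr)
    assume "\<not> a < Max P"
    then have "Max P \<le> f (Max P)" using fixed_point \<open>Min P < a\<close> by (simp add: plin_def)
    then show False using bounds f_no_fixed_point[OF m(2)] by simp
  qed
  show "a \<notin> P" using fixed_point plin_on_P[OF finite_P] f_no_fixed_point by metis
qed

lemma gap_around_fixed_point:
  obtains u v where "consecutive P u v" "u < a" "a < v"
proof -
  obtain u v where "consecutive P u v" "u \<le> a" "a \<le> v"
    using consecutive_around[OF finite_P card_P less_imp_le less_imp_le] fixed_point_inside(1,2) .
  moreover have "u \<noteq> a" "v \<noteq> a"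
    using calculation(1) fixed_point_inside(3) unfolding consecutive_def by auto
  ultimately show ?thesis using that by simp
qed

text \<open>Convergence forces the slope of g on the gap containing a to be less than 1.\<close>
lemma plin_on_gap:
  assumes uv: "consecutive P u v" "u < a" "a < v"
  obtains c where "c > 0" "\<And>x. u \<le> x \<Longrightarrow> x \<le> v \<Longrightarrow> g x - x = c * (a - x)"
proof -
  define K where "K = (f v - f u) / (v - u)"
  have lin: "g x = f u + K * (x - u)" if "u \<le> x" "x \<le> v" for x
    using plin_affine[OF finite_P uv(1) that] unfolding K_def .
  have "f u = a - K * (a - u)" using lin[of a] fixed_point uv by simp
  then have eq: "g x - x = (1 - K) * (a - x)" if "u \<le> x" "x \<le> v" for x
    using lin[OF that] by (simp add: algebra_simps)
  have P: "u \<in> P" "v \<in> P" "u < v" using uv(1) unfolding consecutive_def by auto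
  have "1 - K > 0"
  proof (rule ccontr)
    assume "\<not> 1 - K > 0"
    then have "f u - u \<le> 0" "0 \<le> f v - v"
      using eq[of u] eq[of v] P uv plin_on_P[OF finite_P]
      by (simp_all add: mult_nonpos_nonneg mult_nonpos_nonpos)
    then have "f u < u" "v < f v" using f_no_fixed_point P by (auto simp: order.order_iff_strict)
    then show False using convergent_P P unfolding convergent_def by blast
  qed
  then show thesis using that eq by blast
qed

lemma P_moves_toward_fixed_point:
  assumes "p \<in> P" shows "moves_toward f a p"
proof -
  obtain u v where uv: "consecutive P u v" "u < a" "a < v" by (rule gap_around_fixed_point)
  obtain c where c: "c > 0" "\<And>x. u \<le> x \<Longrightarrow> x \<le> v \<Longrightarrow> g x - x = c * (a - x)"
    using plin_on_gap[OF uv] by blast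
  have P: "u \<in> P" "v \<in> P" "u < v" "\<not> (u < p \<and> p < v)"
    using uv(1) assms unfolding consecutive_def by auto
  have "f u - u = c * (a - u)" "f v - v = c * (a - v)"
    using c(2)[of u] c(2)[of v] P plin_on_P[OF finite_P] by auto
  moreover have "0 < c * (a - u)" "c * (a - v) < 0" using c(1) uv by (simp_all add: mult_pos_neg)
  ultimately have "u < f u" "f v < v" by linarith+
  note no_crossing = convergent_P[unfolded convergent_def]
  show ?thesis unfolding moves_toward_def
  proof (intro conjI impI)
    assume "p < a"
    then have "p \<le> u" using P(4) uv by auto
    show "p < f p"
    proof (rule ccontr)
      assume "\<not> p < f p"
      then have "f p < p" using f_no_fixed_point[OF assms] by linarith
      then have "p < u" using \<open>p \<le> u\<close> \<open>u < f u\<close> by (cases "p = u") auto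
      then show False using no_crossing assms P(1) \<open>f p < p\<close> \<open>u < f u\<close> by blast
    qed
  next
    assume "a < p"
    then have "v \<le> p" using P(4) uv by auto
    show "f p < p"
    proof (rule ccontr)
      assume "\<not> f p < p"
      then have "p < f p" using f_no_fixed_point[OF assms] by linarith
      then have "v < p" using \<open>v \<le> p\<close> \<open>f v < v\<close> by (cases "p = v") auto
      then show False using no_crossing assms P(2) \<open>p < f p\<close> \<open>f v < v\<close> by blast
    qed
  qed
qed

lemma plin_moves_toward_fixed_point:
  assumes "Min P \<le> x" "x \<le> Max P" shows "moves_toward g a x"
proof -
  obtain u v where uv: "consecutive P u v" "u \<le> x" "x \<le> v"
    using consecutive_around[OF finite_P card_P assms] .
  have P: "u \<in> P" "v \<in> P" "u < v" using uv(1) unfolding consecutive_def by auto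
  have moves: "moves_toward f a u" "moves_toward f a v"
    using P_moves_toward_fixed_point P by auto
  have "between (g x - 1 * x) (g u - 1 * u) (g v - 1 * v)"
    using plin_minus_linear_between[OF finite_P uv(1) order_refl uv(2,3) order_refl] .
  then have between: "between (g x - x) (f u - u) (f v - v)"
    using plin_on_P[OF finite_P] P by simp
  consider "v < a" | "a < u" | "u < a" "a < v"
    using fixed_point_inside(3) P by (metis linorder_neqE_linordered_idom order_less_trans)
  then show ?thesis
  proof cases
    case 1
    then show ?thesis using between moves uv P unfolding between_def moves_toward_def by auto
  next
    case 2
    then show ?thesis using between moves uv P unfolding between_def moves_toward_def by auto
  next
    case 3
    then obtain c where c: "c > 0" "g x - x = c * (a - x)" using plin_on_gap uv by metis
    show ?thesis unfolding moves_toward_def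
    proof (intro conjI impI)
      assume "x < a"
      then have "0 < c * (a - x)" using c(1) by simp
      then show "x < g x" using c(2) by linarith
    next
      assume "a < x"
      then have "c * (a - x) < 0" using c(1) by (simp add: mult_pos_neg)
      then show "g x < x" using c(2) by linarith
    qed
  qed
qed

lemma plin_range: "Min P \<le> g x \<and> g x \<le> Max P"
proof -
  have inP: "Min P \<le> f p \<and> f p \<le> Max P" if "p \<in> P" for p
    using f_in_P[OF that] finite_P by auto
  have "P \<noteq> {}" using card_P by auto
  then have m: "Min P \<in> P" "Max P \<in> P" using finite_P by auto
  show ?thesis
  proof (cases "Min P < x \<and> x < Max P")
    case True
    obtain u v where uv: "consecutive P u v" "u \<le> x" "x \<le> v"
      using consecutive_around[OF finite_P card_P, of x] True by auto
    have "u \<in> P" "v \<in> P" using uv(1) unfolding consecutive_def by auto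
    moreover have "between (g x) (g u) (g v)"
      using plin_between[OF finite_P uv(1) order_refl uv(2,3) order_refl] .
    ultimately show ?thesis using inP plin_on_P[OF finite_P] unfolding between_def by force
  next
    case False
    then show ?thesis using inP m by (auto simp: plin_def)
  qed
qed

lemma card_mult_orn_eq_sum_phi: "real (card P) * orn f P = (\<Sum>p\<in>P. phi f a p)"
proof -
  have "orn f P = real (card {x\<in>P. a < x \<and> f x < a}) / real (card P)"
    using orn_eq_down_crossings[OF finite_P f_image_P fixed_point_inside(3)]
      P_moves_toward_fixed_point by blast
  then show ?thesis using sum_phi_eq_down_crossings[OF finite_P] card_P by simp
qed

end

section \<open>Extending a non-decreasing code\<close>

text \<open>For y \<noteq> a, farther a p y says p >_a y or p = y in the notation of the paper.\<close>
definition farther :: "real \<Rightarrow> real \<Rightarrow> real \<Rightarrow> bool" where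
  "farther a p y \<longleftrightarrow> (p \<le> y \<and> y < a) \<or> (a < y \<and> y \<le> p)"

lemma between_farther:
  "between y p q \<Longrightarrow> y \<noteq> a \<Longrightarrow> farther a p y \<or> farther a q y"
  unfolding between_def farther_def by auto

locale convergent_cycle_nondecreasing_code = convergent_cycle +
  assumes nondecreasing: "code_nondecreasing f P a"
begin

abbreviation L :: "real \<Rightarrow> real" where "L \<equiv> code f P a"

abbreviation \<rho> :: real where "\<rho> \<equiv> orn f P"

lemma code_recurrence: "y \<in> P \<Longrightarrow> L (f y) = L y + \<rho> - phi f a y"
  using code_step card_mult_orn_eq_sum_phi cycle_P unfolding cycle_def by blast

lemma code_mono: "x \<in> P \<Longrightarrow> y \<in> P \<Longrightarrow> farther a x y \<Longrightarrow> L x \<le> L y"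
  using nondecreasing unfolding code_nondecreasing_def farther_def by (cases "x = y") auto

definition ext_code :: "real \<Rightarrow> real" where
  "ext_code x = (if x < a then L (Max {p\<in>P. p \<le> x}) else L (Min {p\<in>P. x \<le> p}))"

lemma ext_code_on_P:
  assumes "p \<in> P" shows "ext_code p = L p"
proof -
  have "Max {q\<in>P. q \<le> p} = p" "Min {q\<in>P. p \<le> q} = p"
    using assms finite_P by (auto intro: Max_eqI Min_eqI)
  then show ?thesis by (simp add: ext_code_def)
qed

lemma code_le_ext_code:
  assumes "y \<noteq> a" "w \<in> P" "farther a w y" shows "L w \<le> ext_code y"
proof (cases "y < a")
  case True
  then have "w \<le> y" using assms(3) unfolding farther_def by auto
  then have S: "finite {p\<in>P. p \<le> y}" "w \<in> {p\<in>P. p \<le> y}" using finite_P assms(2) by auto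
  have "Max {p\<in>P. p \<le> y} \<in> {p\<in>P. p \<le> y}" using S by (intro Max_in) auto
  moreover have "w \<le> Max {p\<in>P. p \<le> y}" using Max_ge[OF S] .
  ultimately have "L w \<le> L (Max {p\<in>P. p \<le> y})"
    using code_mono[OF assms(2)] True unfolding farther_def by auto
  then show ?thesis unfolding ext_code_def using True by simp
next
  case False
  then have ya: "a < y" "y \<le> w" using assms(1,3) unfolding farther_def by auto
  then have S: "finite {p\<in>P. y \<le> p}" "w \<in> {p\<in>P. y \<le> p}" using finite_P assms(2) by auto
  have "Min {p\<in>P. y \<le> p} \<in> {p\<in>P. y \<le> p}" using S by (intro Min_in) auto
  moreover have "Min {p\<in>P. y \<le> p} \<le> w" using Min_le[OF S] .
  ultimately have "L w \<le> L (Min {p\<in>P. y \<le> p})"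
    using code_mono[OF assms(2)] ya unfolding farther_def by auto
  then show ?thesis unfolding ext_code_def using False by simp
qed

lemma ext_code_step_via:
  assumes "w \<in> P" "g x \<noteq> a" "farther a (f w) (g x)"
    and "ext_code x - phi g a x \<le> L w - phi f a w"
  shows "ext_code x + \<rho> - phi g a x \<le> ext_code (g x)"
  using code_le_ext_code[OF assms(2) f_in_P[OF assms(1)] assms(3)] code_recurrence[OF assms(1)]
    assms(4) by linarith

lemma ext_code_step_on_P:
  assumes "x \<in> P" "g x \<noteq> a" shows "ext_code x + \<rho> - phi g a x \<le> ext_code (g x)"
proof (rule ext_code_step_via[OF assms])
  show "farther a (f x) (g x)"
    using assms plin_on_P[OF finite_P] unfolding farther_def by auto
  show "ext_code x - phi g a x \<le> L x - phi f a x"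
    using assms(1) plin_on_P[OF finite_P] ext_code_on_P by (simp add: phi_def)
qed

lemma ext_code_step_one_side:
  assumes uv: "consecutive P u v" "v < a \<or> a < u" and x: "u < x" "x < v" "g x \<noteq> a"
  shows "ext_code x + \<rho> - phi g a x \<le> ext_code (g x)"
proof -
  have P: "u \<in> P" "v \<in> P" "u < v" using uv(1) unfolding consecutive_def by auto
  have "between (g x) (g u) (g v)"
    using plin_between[OF finite_P uv(1)] x by simp
  then have "between (g x) (f u) (f v)" using P plin_on_P[OF finite_P] by simp
  then obtain w where w: "w = u \<or> w = v" "farther a (f w) (g x)"
    using between_farther x(3) by blast
  show ?thesis
  proof (rule ext_code_step_via[OF _ x(3) w(2)])
    show "w \<in> P" using w(1) P by auto
    show "ext_code x - phi g a x \<le> L w - phi f a w"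
      using uv(2)
    proof
      assume "v < a"
      then have "ext_code x = L u" "phi g a x = 0" "phi f a w = 0"
        using Max_le_eq_consecutive[OF finite_P uv(1) x(1,2)] x w(1)
        by (auto simp: ext_code_def phi_def)
      moreover have "L u \<le> L w"
        using code_mono[of u w] P w(1) \<open>v < a\<close> by (auto simp: farther_def)
      ultimately show ?thesis by simp
    next
      assume "a < u"
      then have "ext_code x = L v"
        using Min_ge_eq_consecutive[OF finite_P uv(1) x(1,2)] x by (simp add: ext_code_def)
      moreover have "L v \<le> L w"
        using code_mono[of v w] P w(1) \<open>a < u\<close> by (auto simp: farther_def)
      moreover have "phi f a w \<le> phi g a x"
        using w(2) x \<open>a < u\<close> by (auto simp: phi_def farther_def)
      ultimately show ?thesis by simp
    qed
  qed
qed

lemma ext_code_step_gap: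
  assumes uv: "consecutive P u v" "u < a" "a < v" and x: "u < x" "x < v" "x \<noteq> a" "g x \<noteq> a"
  shows "ext_code x + \<rho> - phi g a x \<le> ext_code (g x)"
proof -
  have P: "u \<in> P" "v \<in> P" using uv(1) unfolding consecutive_def by auto
  have gu: "g u = f u" and gv: "g v = f v" using P plin_on_P[OF finite_P] by auto
  show ?thesis
  proof (cases "x < a")
    case True
    have "between (g x) (f u) a"
      using plin_between[OF finite_P uv(1), of u x a f] x True uv gu fixed_point by simp
    then have "farther a (f u) (g x)" using between_farther[of "g x" "f u" a a] x(4)
      by (auto simp: farther_def)
    moreover have "ext_code x = L u"
      using Max_le_eq_consecutive[OF finite_P uv(1) x(1,2)] True by (simp add: ext_code_def)
    ultimately show ?thesis
      using ext_code_step_via[OF P(1) x(4)] True uv by (simp add: phi_def)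
  next
    case False
    then have "a < x" using x(3) by simp
    have "between (g x) a (f v)"
      using plin_between[OF finite_P uv(1), of a x v f] x \<open>a < x\<close> uv gv fixed_point by simp
    then have far: "farther a (f v) (g x)" using between_farther[of "g x" a "f v" a] x(4)
      by (auto simp: farther_def)
    moreover have "ext_code x = L v"
      using Min_ge_eq_consecutive[OF finite_P uv(1) x(1,2)] \<open>a < x\<close> by (simp add: ext_code_def)
    moreover have "phi f a v = phi g a x"
      using far \<open>a < x\<close> uv by (auto simp: phi_def farther_def)
    ultimately show ?thesis using ext_code_step_via[OF P(2) x(4)] by simp
  qed
qed

lemma ext_code_step:
  assumes "Min P \<le> x" "x \<le> Max P" "x \<noteq> a" "g x \<noteq> a"
  shows "ext_code x + \<rho> - phi g a x \<le> ext_code (g x)"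
proof (cases "x \<in> P")
  case True
  then show ?thesis using ext_code_step_on_P assms(4) by blast
next
  case False
  obtain u v where uv: "consecutive P u v" "u \<le> x" "x \<le> v"
    using consecutive_around[OF finite_P card_P assms(1,2)] .
  then have P: "u \<in> P" "v \<in> P" "u < x" "x < v"
    using False unfolding consecutive_def by (auto simp: order_le_less)
  consider "v < a \<or> a < u" | "u < a" "a < v"
    using fixed_point_inside(3) P by (metis linorder_neqE_linordered_idom)
  then show ?thesis
    using ext_code_step_one_side[OF uv(1)] ext_code_step_gap[OF uv(1)] P assms(3,4) by cases auto
qed

lemma rho_le_orn_plin:
  assumes Q: "cycle g Q" shows "\<rho> \<le> orn g Q"
proof -
  have fin: "finite Q" and perm: "g ` Q = Q" and "card Q \<ge> 2"
    using Q periodic_orbit_finite periodic_orbit_image unfolding cycle_def by auto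
  have aQ: "a \<notin> Q" using cycle_no_fixed_point[OF Q] fixed_point by blast
  have in_hull: "Min P \<le> x \<and> x \<le> Max P" if "x \<in> Q" for x
    using that perm plin_range by (metis imageE)
  have "(\<Sum>x\<in>Q. ext_code x + \<rho> - phi g a x) \<le> (\<Sum>x\<in>Q. ext_code (g x))"
  proof (rule sum_mono)
    fix x assume "x \<in> Q"
    then show "ext_code x + \<rho> - phi g a x \<le> ext_code (g x)"
      using ext_code_step in_hull aQ perm by blast
  qed
  also have "\<dots> = (\<Sum>x\<in>Q. ext_code x)"
    using sum.reindex_bij_betw[of g Q Q ext_code] finite_surj_inj[OF fin] perm
    by (simp add: bij_betw_def)
  finally have "real (card Q) * \<rho> \<le> (\<Sum>x\<in>Q. phi g a x)"
    by (simp add: sum.distrib sum_subtractf)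
  also have "\<dots> = real (card {x\<in>Q. a < x \<and> g x < a})"
    using sum_phi_eq_down_crossings[OF fin] .
  finally have "real (card Q) * \<rho> \<le> real (card {x\<in>Q. a < x \<and> g x < a})" .
  moreover have "orn g Q = real (card {x\<in>Q. a < x \<and> g x < a}) / real (card Q)"
    using orn_eq_down_crossings[OF fin perm aQ] plin_moves_toward_fixed_point in_hull by blast
  moreover have "0 < real (card Q)" using \<open>card Q \<ge> 2\<close> by simp
  ultimately show ?thesis by (simp add: pos_le_divide_eq mult.commute)
qed

end

theorem lemma3p3:
  fixes f :: "real \<Rightarrow> real" and P :: "real set" and n r s :: nat and a :: real
  assumes "cycle f P"
    and "convergent f P"
    and "orp f P = (n * r, n * s)"
    and "coprime r s"
    and "n > 1"
    and "plin f P a = a"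
    and "code_nondecreasing f P a"
  shows "\<forall>Q. cycle (plin f P) Q \<longrightarrow> orn (plin f P) Q \<ge> real r / real s"
proof -
  interpret convergent_cycle_nondecreasing_code f P a
    using assms(1,2,6,7) by unfold_locales
  have "ocount f P div 2 = n * r" "card P = n * s" using assms(3) unfolding orp_def by auto
  then have "orn f P = real r / real s" using assms(5) unfolding orn_def by simp
  then show ?thesis using rho_le_orn_plin by simp
qed

end
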